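(* Let $\widetilde{\Sigma}_1,\ldots,\widetilde{\Sigma}_n$ be pairwise disjoint visibly pushdown alphabets, $\widetilde{\Sigma}=\widetilde{\Sigma}_1\uplus\cdots\uplus\widetilde{\Sigma}_n$, and let $P_i\subseteq\widetilde{\Sigma}_i^*$ be well-matched visibly pushdown languages. Let $\mathcal{M}$ be a semantics on a state set $C$ in which every call and every return of each $\widetilde{\Sigma}_i$ belongs to $\widetilde{\Sigma}_i^{\mathsf{indep}}$. If every $P_i$ is tail-independent (or, respectively, every $P_i$ is head-independent), then for all $\mathsf{pre},\mathsf{post}\subseteq C$: $\{\mathsf{pre}\}\,P_1\bowtie\cdots\bowtie P_n\,\{\mathsf{post}\}$ implies $\{\mathsf{pre}\}\,P_1\parallel\cdots\parallel P_n\,\{\mathsf{post}\}$.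
   Context: A visibly pushdown (VP) alphabet is a finite alphabet partitioned into calls, returns and internals; $\widetilde{\Sigma}$ has as calls/returns/internals the unions. Calls and returns in a word are matched like opening and closing parentheses (internals ignored); a word is well-matched if all calls and returns are matched. Visibly pushdown languages are those accepted by pushdown automata that push on calls, pop on returns and leave the stack unchanged on internals. Shuffle: $P_1\parallel\cdots\parallel P_n=\{w\in\widetilde{\Sigma}^*:\Pi_{\widetilde{\Sigma}_i}(w)\in P_i\ \forall i\}$, $\Pi_{\widetilde{\Sigma}_i}$ erasing letters outside $\widetilde{\Sigma}_i$; a word is well-nested if every matched call–return pair consists of letters from the same $\widetilde{\Sigma}_k$; $P_1\bowtie\cdots\bowtie P_n$ is the set of well-nested words of the shuffle. A semantics is a map $\mathcal{M}$ from letters of $\widetilde{\Sigma}$ to binary relations on a set $C$ of states, extended to words by relational composition ($\mathcal{M}(\epsilon)$ is the identity, $\mathcal{M}(wa)$ is $\mathcal{M}(w)$ followed by $\mathcal{M}(a)$). For $\mathsf{pre},\mathsf{post}\subseteq C$ and a language $L$, $\{\mathsf{pre}\}L\{\mathsf{post}\}$ means: for all $\rho\in L$ and $(s,s')\in\mathcal{M}(\rho)$, $s\in\mathsf{pre}$ implies $s'\in\mathsf{post}$. Letters $a,b$ soundly commute if $\mathcal{M}(ab)=\mathcal{M}(ba)$. $\widetilde{\Sigma}_i^{\mathsf{indep}}$ is the set of letters of $\widetilde{\Sigma}_i$ that soundly commute with every letter of every $\widetilde{\Sigma}_j$, $j\ne i$. $P_i$ is tail-independent (resp. head-independent) if every $\rho\in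 P_i$ can be written $\rho=uv$, $u,v\in\widetilde{\Sigma}_i^*$, such that (1) all calls are in $u$ and all returns in $v$, except those at a position $j$ such that all letters between $j$ and its matching position are in $\widetilde{\Sigma}_i^{\mathsf{indep}}$; and (2) all letters of $v$ (resp. of $u$) are in $\widetilde{\Sigma}_i^{\mathsf{indep}}$. *)

theory Defs
  imports Main
begin

definition vp_alphabet :: "'a set \<Rightarrow> 'a set \<Rightarrow> 'a set \<Rightarrow> bool" where
  "vp_alphabet Cl Rt It \<longleftrightarrow> finite Cl \<and> finite Rt \<and> finite It \<and>
     Cl \<inter> Rt = {} \<and> Cl \<inter> It = {} \<and> Rt \<inter> It = {}"

inductive well_matched :: "'a set \<Rightarrow> 'a set \<Rightarrow> 'a list \<Rightarrow> bool"
  for Cl Rt where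
  wm_nil: "well_matched Cl Rt []"
| wm_int: "a \<notin> Cl \<Longrightarrow> a \<notin> Rt \<Longrightarrow> well_matched Cl Rt [a]"
| wm_nest: "c \<in> Cl \<Longrightarrow> r \<in> Rt \<Longrightarrow> well_matched Cl Rt u \<Longrightarrow>
            well_matched Cl Rt ([c] @ u @ [r])"
| wm_app: "well_matched Cl Rt u \<Longrightarrow> well_matched Cl Rt v \<Longrightarrow> well_matched Cl Rt (u @ v)"

definition matched :: "'a set \<Rightarrow> 'a set \<Rightarrow> 'a list \<Rightarrow> nat \<Rightarrow> nat \<Rightarrow> bool" where
  "matched Cl Rt w j k \<longleftrightarrow> j < k \<and> k < length w \<and> w ! j \<in> Cl \<and> w ! k \<in> Rt \<and>
     well_matched Cl Rt (take (k - j - 1) (drop (j + 1) w))"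

record ('q, 'a, 's) vpa =
  vpa_init :: "'q set"
  vpa_final :: "'q set"
  vpa_call :: "('q \<times> 'a \<times> 'q \<times> 's) set"
  vpa_ret :: "('q \<times> 'a \<times> 's option \<times> 'q) set"   (* None: return on empty stack *)
  vpa_int :: "('q \<times> 'a \<times> 'q) set"

inductive vpa_run :: "('q, 'a, 's) vpa \<Rightarrow> 'a set \<Rightarrow> 'a set \<Rightarrow> 'a set \<Rightarrow>
    'q \<times> 's list \<Rightarrow> 'a list \<Rightarrow> 'q \<times> 's list \<Rightarrow> bool"
  for A Cl Rt It where
  run_nil: "vpa_run A Cl Rt It cfg [] cfg"
| run_call: "a \<in> Cl \<Longrightarrow> (q, a, q', g) \<in> vpa_call A \<Longrightarrow>
     vpa_run A Cl Rt It (q', g # st) w cfg \<Longrightarrow> vpa_run A Cl Rt It (q, st) (a # w) cfg"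
| run_ret: "a \<in> Rt \<Longrightarrow> (q, a, Some g, q') \<in> vpa_ret A \<Longrightarrow>
     vpa_run A Cl Rt It (q', st) w cfg \<Longrightarrow> vpa_run A Cl Rt It (q, g # st) (a # w) cfg"
| run_ret_empty: "a \<in> Rt \<Longrightarrow> (q, a, None, q') \<in> vpa_ret A \<Longrightarrow>
     vpa_run A Cl Rt It (q', []) w cfg \<Longrightarrow> vpa_run A Cl Rt It (q, []) (a # w) cfg"
| run_int: "a \<in> It \<Longrightarrow> (q, a, q') \<in> vpa_int A \<Longrightarrow>
     vpa_run A Cl Rt It (q', st) w cfg \<Longrightarrow> vpa_run A Cl Rt It (q, st) (a # w) cfg"

definition vpa_lang :: "('q, 'a, 's) vpa \<Rightarrow> 'a set \<Rightarrow> 'a set \<Rightarrow> 'a set \<Rightarrow> 'a list set" where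
  "vpa_lang A Cl Rt It = {w. \<exists>q0 \<in> vpa_init A. \<exists>q st.
      q \<in> vpa_final A \<and> vpa_run A Cl Rt It (q0, []) w (q, st)}"

(* L is a visibly pushdown language over the VP alphabet (Cl, Rt, It):
   accepted by a VPA with finitely many states and stack symbols
   (finite transition relations, finite initial set). *)
definition vpl :: "'a set \<Rightarrow> 'a set \<Rightarrow> 'a set \<Rightarrow> 'a list set \<Rightarrow> bool" where
  "vpl Cl Rt It L \<longleftrightarrow> (\<exists>A :: (nat, 'a, nat) vpa.
      finite (vpa_init A) \<and> finite (vpa_call A) \<and> finite (vpa_ret A) \<and> finite (vpa_int A) \<and>
      L = vpa_lang A Cl Rt It \<inter> lists (Cl \<union> Rt \<union> It))"

definition sem_word :: "('a \<Rightarrow> ('c \<times> 'c) set) \<Rightarrow> 'a list \<Rightarrow> ('c \<times> 'c) set" where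
  "sem_word M w = foldl (\<lambda>R a. R O M a) Id w"

definition hoare :: "('a \<Rightarrow> ('c \<times> 'c) set) \<Rightarrow> 'c set \<Rightarrow> 'a list set \<Rightarrow> 'c set \<Rightarrow> bool" where
  "hoare M pre L post \<longleftrightarrow>
     (\<forall>\<rho> \<in> L. \<forall>s s'. (s, s') \<in> sem_word M \<rho> \<longrightarrow> s \<in> pre \<longrightarrow> s' \<in> post)"

definition sound_commute :: "('a \<Rightarrow> ('c \<times> 'c) set) \<Rightarrow> 'a \<Rightarrow> 'a \<Rightarrow> bool" where
  "sound_commute M a b \<longleftrightarrow> sem_word M [a, b] = sem_word M [b, a]"

definition sigma :: "(nat \<Rightarrow> 'a set) \<Rightarrow> (nat \<Rightarrow> 'a set) \<Rightarrow> (nat \<Rightarrow> 'a set) \<Rightarrow> nat \<Rightarrow> 'a set" where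
  "sigma Cl Rt It i = Cl i \<union> Rt i \<union> It i"

definition indep :: "nat \<Rightarrow> (nat \<Rightarrow> 'a set) \<Rightarrow> (nat \<Rightarrow> 'a set) \<Rightarrow> (nat \<Rightarrow> 'a set) \<Rightarrow>
    ('a \<Rightarrow> ('c \<times> 'c) set) \<Rightarrow> nat \<Rightarrow> 'a set" where
  "indep n Cl Rt It M i = {a \<in> sigma Cl Rt It i.
      \<forall>j < n. j \<noteq> i \<longrightarrow> (\<forall>b \<in> sigma Cl Rt It j. sound_commute M a b)}"

definition shuffle :: "nat \<Rightarrow> (nat \<Rightarrow> 'a set) \<Rightarrow> (nat \<Rightarrow> 'a set) \<Rightarrow> (nat \<Rightarrow> 'a set) \<Rightarrow>
    (nat \<Rightarrow> 'a list set) \<Rightarrow> 'a list set" where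
  "shuffle n Cl Rt It P = {w \<in> lists (\<Union>i<n. sigma Cl Rt It i).
      \<forall>i<n. filter (\<lambda>x. x \<in> sigma Cl Rt It i) w \<in> P i}"

definition well_nested :: "nat \<Rightarrow> (nat \<Rightarrow> 'a set) \<Rightarrow> (nat \<Rightarrow> 'a set) \<Rightarrow> (nat \<Rightarrow> 'a set) \<Rightarrow>
    'a list \<Rightarrow> bool" where
  "well_nested n Cl Rt It w \<longleftrightarrow> (\<forall>j k. matched (\<Union>i<n. Cl i) (\<Union>i<n. Rt i) w j k \<longrightarrow>
      (\<exists>i<n. w ! j \<in> sigma Cl Rt It i \<and> w ! k \<in> sigma Cl Rt It i))"

definition nested_shuffle :: "nat \<Rightarrow> (nat \<Rightarrow> 'a set) \<Rightarrow> (nat \<Rightarrow> 'a set) \<Rightarrow> (nat \<Rightarrow> 'a set) \<Rightarrow>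
    (nat \<Rightarrow> 'a list set) \<Rightarrow> 'a list set" where
  "nested_shuffle n Cl Rt It P = {w \<in> shuffle n Cl Rt It P. well_nested n Cl Rt It w}"

definition indep_split :: "nat \<Rightarrow> (nat \<Rightarrow> 'a set) \<Rightarrow> (nat \<Rightarrow> 'a set) \<Rightarrow> (nat \<Rightarrow> 'a set) \<Rightarrow>
    ('a \<Rightarrow> ('c \<times> 'c) set) \<Rightarrow> nat \<Rightarrow> 'a list \<Rightarrow> 'a list \<Rightarrow> bool" where
  "indep_split n Cl Rt It M i u v \<longleftrightarrow>
     (let \<rho> = u @ v in
      \<forall>j < length \<rho>.
        ((\<rho> ! j \<in> Cl i \<and> length u \<le> j) \<or> (\<rho> ! j \<in> Rt i \<and> j < length u)) \<longrightarrow>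
        (\<exists>k. (matched (Cl i) (Rt i) \<rho> j k \<or> matched (Cl i) (Rt i) \<rho> k j) \<and>
             (\<forall>l. min j k \<le> l \<and> l \<le> max j k \<longrightarrow> \<rho> ! l \<in> indep n Cl Rt It M i)))"

definition tail_independent :: "nat \<Rightarrow> (nat \<Rightarrow> 'a set) \<Rightarrow> (nat \<Rightarrow> 'a set) \<Rightarrow> (nat \<Rightarrow> 'a set) \<Rightarrow>
    ('a \<Rightarrow> ('c \<times> 'c) set) \<Rightarrow> (nat \<Rightarrow> 'a list set) \<Rightarrow> nat \<Rightarrow> bool" where
  "tail_independent n Cl Rt It M P i \<longleftrightarrow> (\<forall>\<rho> \<in> P i. \<exists>u v. \<rho> = u @ v \<and>
     u \<in> lists (sigma Cl Rt It i) \<and> v \<in> lists (sigma Cl Rt It i) \<and>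
     indep_split n Cl Rt It M i u v \<and> set v \<subseteq> indep n Cl Rt It M i)"

definition head_independent :: "nat \<Rightarrow> (nat \<Rightarrow> 'a set) \<Rightarrow> (nat \<Rightarrow> 'a set) \<Rightarrow> (nat \<Rightarrow> 'a set) \<Rightarrow>
    ('a \<Rightarrow> ('c \<times> 'c) set) \<Rightarrow> (nat \<Rightarrow> 'a list set) \<Rightarrow> nat \<Rightarrow> bool" where
  "head_independent n Cl Rt It M P i \<longleftrightarrow> (\<forall>\<rho> \<in> P i. \<exists>u v. \<rho> = u @ v \<and>
     u \<in> lists (sigma Cl Rt It i) \<and> v \<in> lists (sigma Cl Rt It i) \<and>
     indep_split n Cl Rt It M i u v \<and> set u \<subseteq> indep n Cl Rt It M i)"

end

theory Submission
  imports Defs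
begin

text \<open>Every word of the shuffle can be reordered into a well-nested word of the shuffle that
  induces the same relation. The reordering keeps the projection onto each component and the
  relative order of the dependent letters, i.e. those outside \<open>\<Sigma>\<^sub>i\<^sup>indep\<close>. Two letters
  that do not commute lie in the same component or are both dependent, so a trace argument
  shows that the relation is unchanged.

  Under tail independence the reordered word holds back every independent letter until the
  next dependent letter of its own component, and at the end releases the remaining letters so
  as to close the pending calls from the top of the stack. Tail independence guarantees that a
  block released before a dependent letter only returns from calls it opened itself, hence every
  return is matched with a call of its own component. The head-independent case is the mirror
  image under reversal, which exchanges calls and returns.\<close>

section \<open>Relational semantics of words\<close>

lemma sem_word_Nil [simp]: "sem_word M [] = Id"
  by (simp add: sem_word_def)

lemma foldl_relcomp_eq:
  fixes M :: "'a \<Rightarrow> ('c \<times> 'c) set" and R :: "('c \<times> 'c) set"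
  shows "foldl (\<lambda>R a. R O M a) R w = R O foldl (\<lambda>R a. R O M a) Id w"
proof (induction w arbitrary: R)
  case (Cons a w)
  show ?case using Cons[of "R O M a"] Cons[of "Id O M a"] by (simp add: O_assoc)
qed simp

lemma sem_word_Cons: "sem_word M (a # w) = M a O sem_word M w"
  unfolding sem_word_def by (simp add: foldl_relcomp_eq[where R = "M a"])

lemma sem_word_append: "sem_word M (x @ y) = sem_word M x O sem_word M y"
  by (induction x) (simp_all add: sem_word_Cons O_assoc)

lemma sound_commute_sym: "sound_commute M a b \<longleftrightarrow> sound_commute M b a"
  unfolding sound_commute_def by auto

lemma sem_word_snoc_eq_Cons:
  assumes "\<forall>b\<in>set p. sound_commute M a b"
  shows "sem_word M (p @ [a]) = sem_word M (a # p)"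
  using assms
proof (induction p)
  case (Cons b p)
  have ab: "M a O M b = M b O M a"
    using Cons.prems unfolding sound_commute_def by (simp add: sem_word_Cons)
  have "sem_word M ((b # p) @ [a]) = M b O (M a O sem_word M p)"
    using Cons by (simp add: sem_word_Cons)
  also have "\<dots> = sem_word M (a # b # p)"
    by (simp add: sem_word_Cons ab flip: O_assoc)
  finally show ?case .
qed simp

lemma filter_pair_first_occurrence:
  assumes "a \<notin> set p" "b \<in> set p"
  shows "filter (\<lambda>z. z \<in> {a, b}) (p @ a # q) \<noteq> a # xs"
proof -
  obtain p1 p2 where p: "p = p1 @ b # p2" "b \<notin> set p1"
    using assms(2) by (meson split_list_first)
  moreover have "filter (\<lambda>z. z \<in> {a, b}) p1 = []"
    using assms(1) p by (auto simp: filter_empty_conv)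
  ultimately show ?thesis using assms(1) by auto
qed

text \<open>The first letter of \<open>w'\<close> occurs in \<open>w\<close> after letters that all commute with it,
  so it can be moved to the front of \<open>w\<close>.\<close>

lemma sem_word_eq_if_pair_projections_eq:
  assumes "\<And>x y. x = y \<or> \<not> sound_commute M x y \<Longrightarrow>
      filter (\<lambda>z. z \<in> {x, y}) w = filter (\<lambda>z. z \<in> {x, y}) w'"
  shows "sem_word M w = sem_word M w'"
  using assms
proof (induction w' arbitrary: w)
  case Nil
  then have "filter (\<lambda>z. z \<in> {hd w}) w = []" by (metis insert_absorb2 filter.simps(1))
  then have "w = []" by (cases w) auto
  then show ?case by simp
next
  case (Cons a r)
  have "filter (\<lambda>z. z \<in> {a}) w \<noteq> []"
    using Cons.prems[of a a] by simp
  then have "a \<in> set w" by (auto simp: filter_empty_conv)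
  then obtain p q where w: "w = p @ a # q" and a_p: "a \<notin> set p"
    by (meson split_list_first)
  have commute: "sound_commute M a b" if "b \<in> set p" for b
    using Cons.prems[of a b] filter_pair_first_occurrence[OF a_p that, of q] unfolding w by auto
  have "filter (\<lambda>z. z \<in> {x, y}) (p @ q) = filter (\<lambda>z. z \<in> {x, y}) r"
    if dep: "x = y \<or> \<not> sound_commute M x y" for x y
  proof -
    have "filter (\<lambda>z. z \<in> {x, y}) p = []" if "a \<in> {x, y}"
    proof -
      have "b \<notin> {x, y}" if "b \<in> set p" for b
        using commute[OF that] dep \<open>a \<in> {x, y}\<close> a_p that sound_commute_sym by fastforce
      then show ?thesis by (auto simp: filter_empty_conv)
    qed
    then show ?thesis using Cons.prems[OF dep] unfolding w by (cases "a \<in> {x, y}") auto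
  qed
  then have "sem_word M (p @ q) = sem_word M r" by (rule Cons.IH)
  have "sem_word M w = sem_word M (p @ [a]) O sem_word M q"
    unfolding w by (metis append.assoc append_Cons append_Nil sem_word_append)
  also have "\<dots> = M a O sem_word M (p @ q)"
    using sem_word_snoc_eq_Cons[of p M a] commute
    by (simp add: sem_word_Cons sem_word_append O_assoc)
  finally show ?case using \<open>sem_word M (p @ q) = sem_word M r\<close> by (simp add: sem_word_Cons)
qed

section \<open>Balance of calls and returns\<close>

fun balance :: "'a set \<Rightarrow> 'a set \<Rightarrow> 'a list \<Rightarrow> int" where
  "balance C R [] = 0"
| "balance C R (a # w) = (if a \<in> C then 1 else if a \<in> R then -1 else 0) + balance C R w"

lemma balance_append [simp]: "balance C R (x @ y) = balance C R x + balance C R y"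
  by (induction x) auto

lemma balance_filter: "C \<union> R \<subseteq> {a. P a} \<Longrightarrow> balance C R (filter P w) = balance C R w"
  by (induction w) auto

lemma well_matched_balance:
  "well_matched C R w \<Longrightarrow> C \<inter> R = {} \<Longrightarrow> balance C R w = 0"
  by (induction rule: well_matched.induct) auto

lemma well_matched_prefix_balance_nonneg:
  "well_matched C R w \<Longrightarrow> C \<inter> R = {} \<Longrightarrow> 0 \<le> balance C R (take m w)"
proof (induction arbitrary: m rule: well_matched.induct)
  case (wm_nest c r u)
  then show ?case
    using well_matched_balance[of C R u] by (cases m) (auto simp: take_Cons' take_append)
next
  case (wm_app u v)
  then show ?case
    using well_matched_balance[of C R u] by (auto simp: take_append)
qed (auto simp: take_Cons')

lemma well_matched_rev: "well_matched C R w \<Longrightarrow> well_matched R C (rev w)"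
proof (induction rule: well_matched.induct)
  case (wm_nest c r u)
  then show ?case using well_matched.wm_nest[of r R c C "rev u"] by simp
next
  case (wm_app u v)
  then show ?case using well_matched.wm_app by fastforce
qed (auto intro: well_matched.intros)

lemma matched_iff_split:
  "matched C R w j k \<longleftrightarrow> (\<exists>x c u r y. w = x @ c # u @ r # y \<and> j = length x \<and>
     k = Suc (length x + length u) \<and> c \<in> C \<and> r \<in> R \<and> well_matched C R u)"
proof
  assume m: "matched C R w j k"
  then have jk: "j < k" "k < length w" unfolding matched_def by auto
  define u where "u = take (k - j - 1) (drop (j + 1) w)"
  have "drop (j + 1) w = u @ drop k w"
    using jk unfolding u_def
    by (metis append_take_drop_id drop_drop Suc_eq_plus1 Suc_leI le_add_diff_inverse2 diff_diff_left)
  then have "w = take j w @ w ! j # u @ w ! k # drop (k + 1) w"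
    using jk by (metis Cons_nth_drop_Suc Suc_eq_plus1 append_take_drop_id less_trans)
  moreover have "j = length (take j w)" "k = Suc (length (take j w) + length u)"
    using jk unfolding u_def by auto
  moreover have "w ! j \<in> C" "w ! k \<in> R" "well_matched C R u"
    using m unfolding matched_def u_def by auto
  ultimately show "\<exists>x c u r y. w = x @ c # u @ r # y \<and> j = length x \<and>
     k = Suc (length x + length u) \<and> c \<in> C \<and> r \<in> R \<and> well_matched C R u"
    by blast
next
  assume "\<exists>x c u r y. w = x @ c # u @ r # y \<and> j = length x \<and>
     k = Suc (length x + length u) \<and> c \<in> C \<and> r \<in> R \<and> well_matched C R u"
  then show "matched C R w j k"
    unfolding matched_def by (auto simp: nth_append)
qed

lemma matched_rev:
  assumes "matched C R w j k"
  shows "matched R C (rev w) (length w - 1 - k) (length w - 1 - j)"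
proof -
  obtain x c u r y where "w = x @ c # u @ r # y" "j = length x" "k = Suc (length x + length u)"
    "c \<in> C" "r \<in> R" "well_matched C R u"
    using assms unfolding matched_iff_split by blast
  then show ?thesis
    unfolding matched_iff_split
    by (intro exI[of _ "rev y"] exI[of _ r] exI[of _ "rev u"] exI[of _ c] exI[of _ "rev x"])
      (simp add: well_matched_rev)
qed

lemma matched_infix:
  assumes "matched C R (x @ g @ z) j k" "length x \<le> j" "k < length x + length g"
  shows "matched C R g (j - length x) (k - length x)"
proof -
  have "take (k - j - 1) (drop (j + 1) (x @ g @ z)) = take (k - j - 1) (drop (j - length x + 1) g)"
    using assms(2,3) by (simp add: drop_append take_append Suc_diff_le)
  then show ?thesis
    using assms unfolding matched_def by (auto simp: nth_append split: if_splits)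
qed

lemma prefix_balance_nonneg_if_returns_matched:
  assumes "C \<inter> R = {}" and returns_matched: "\<forall>q<length g. g ! q \<in> R \<longrightarrow> (\<exists>k. matched C R g k q)"
  shows "0 \<le> balance C R (take m g)"
proof (induction m rule: less_induct)
  case (less m)
  show ?case
  proof (rule ccontr)
    assume neg: "\<not> 0 \<le> balance C R (take m g)"
    have "m \<le> length g"
      using less[of "length g"] neg
      by (metis linorder_not_le take_all_iff take_take min_absorb2 nle_le)
    then obtain q where q: "m = Suc q" "q < length g"
      using neg by (cases m) auto
    then have "take m g = take q g @ [g ! q]" by (simp add: take_Suc_conv_app_nth)
    then have "g ! q \<in> R" and balance_q: "balance C R (take q g) = 0"
      using less[of q] neg q(1) by (auto split: if_splits)
    then obtain k where "matched C R g k q" using returns_matched q(2) by blast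
    then obtain x c u r y where g: "g = x @ c # u @ r # y" "k = length x"
      "q = Suc (length x + length u)" "c \<in> C" "well_matched C R u"
      unfolding matched_iff_split by auto
    then have "take q g = x @ c # u" by simp
    then have "balance C R (take k g) = -1"
      using balance_q g assms(1) well_matched_balance[of C R u] by auto
    then show False using less[of k] g(2,3) q(1) by simp
  qed
qed

primrec split_below :: "'a set \<Rightarrow> 'a set \<Rightarrow> int \<Rightarrow> 'a list \<Rightarrow> 'a list \<times> 'a list" where
  "split_below C R d [] = ([], [])"
| "split_below C R d (a # x) =
     (let d' = d + balance C R [a] in
      if d' < 0 then ([a], x) else apfst (Cons a) (split_below C R d' x))"

lemma split_below_append: "fst (split_below C R d x) @ snd (split_below C R d x) = x"
  by (induction x arbitrary: d) (auto simp: Let_def)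

lemma split_below_balance:
  assumes "0 \<le> d" "d + balance C R x < 0"
  shows "d + balance C R (fst (split_below C R d x)) = -1"
    and "-1 \<le> d + balance C R (take m (fst (split_below C R d x)))"
  using assms
proof (induction x arbitrary: d m)
  case (Cons a x)
  { case 1 then show ?case using Cons.IH(1)[of "d + balance C R [a]"]
      by (auto simp: Let_def split: if_splits) }
  { case 2 then show ?case using Cons.IH(2)[of "d + balance C R [a]"]
      by (cases m) (auto simp: Let_def split: if_splits) }
qed auto

text \<open>This is the only consequence of tail independence that the reordering uses.\<close>

definition early_returns_enclosed :: "'a set \<Rightarrow> 'a set \<Rightarrow> 'a set \<Rightarrow> 'a list \<Rightarrow> bool" where
  "early_returns_enclosed C R D \<rho> \<longleftrightarrow> (\<forall>q j. q < j \<and> j < length \<rho> \<and> \<rho> ! q \<in> R \<and> \<rho> ! j \<in> D \<longrightarrow>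
     (\<exists>k. matched C R \<rho> k q \<and> (\<forall>l. k \<le> l \<and> l \<le> q \<longrightarrow> \<rho> ! l \<notin> D)))"

lemma prefix_balance_nonneg_before_dependent:
  assumes enclosed: "early_returns_enclosed C R D (x @ g @ z)" and "C \<inter> R = {}"
    and x: "x = [] \<or> last x \<in> D" and "set g \<inter> D = {}" and "set z \<inter> D \<noteq> {}"
  shows "0 \<le> balance C R (take m g)"
proof (rule prefix_balance_nonneg_if_returns_matched[OF \<open>C \<inter> R = {}\<close>], intro allI impI)
  fix q assume q: "q < length g" "g ! q \<in> R"
  define \<rho> where "\<rho> = x @ g @ z"
  obtain t where t: "t < length z" "z ! t \<in> D"
    using \<open>set z \<inter> D \<noteq> {}\<close> by (auto simp: in_set_conv_nth)
  have "length x + q < length x + length g + t" "length x + length g + t < length \<rho>"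
    "\<rho> ! (length x + q) \<in> R" "\<rho> ! (length x + length g + t) \<in> D"
    using q t unfolding \<rho>_def by (auto simp: nth_append)
  then obtain k where k: "matched C R \<rho> k (length x + q)"
    and free: "\<forall>l. k \<le> l \<and> l \<le> length x + q \<longrightarrow> \<rho> ! l \<notin> D"
    using enclosed unfolding early_returns_enclosed_def \<rho>_def by blast
  have "length x \<le> k"
  proof (rule ccontr)
    assume "\<not> length x \<le> k"
    then have "x \<noteq> []" and "k \<le> length x - 1" by auto
    then have "\<rho> ! (length x - 1) \<notin> D" using free by simp
    with \<open>x \<noteq> []\<close> show False
      using x unfolding \<rho>_def by (simp add: nth_append last_conv_nth)
  qed
  then have "matched C R g (k - length x) q"
    using matched_infix[of C R x g z k "length x + q"] k q(1) unfolding \<rho>_def by simp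
  then show "\<exists>k. matched C R g k q" ..
qed

section \<open>Stacks of labels\<close>

fun label_run :: "'a set \<Rightarrow> 'a set \<Rightarrow> ('a \<Rightarrow> 'l) \<Rightarrow> 'l list \<Rightarrow> 'a list \<Rightarrow> 'l list option" where
  "label_run C R lab S [] = Some S"
| "label_run C R lab S (a # w) =
     (if a \<in> C then label_run C R lab (lab a # S) w
      else if a \<in> R then
        (case S of [] \<Rightarrow> None | t # S' \<Rightarrow> if t = lab a then label_run C R lab S' w else None)
      else label_run C R lab S w)"

lemma label_run_append:
  "label_run C R lab S (x @ y) = Option.bind (label_run C R lab S x) (\<lambda>S'. label_run C R lab S' y)"
  by (induction x arbitrary: S) (auto split: list.splits)

lemma label_run_well_matched:
  assumes "well_matched C R u" "C \<inter> R = {}" "label_run C R lab S u \<noteq> None"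
  shows "label_run C R lab S u = Some S"
  using assms
proof (induction arbitrary: S rule: well_matched.induct)
  case (wm_nest c r u)
  obtain T where "label_run C R lab (lab c # S) u = Some T"
    using wm_nest.hyps(1) wm_nest.prems(2)
    by (cases "label_run C R lab (lab c # S) u") (auto simp: label_run_append)
  moreover from this have "T = lab c # S" using wm_nest.IH[of "lab c # S"] wm_nest.prems(1) by simp
  moreover have "r \<notin> C" using wm_nest.hyps(2) wm_nest.prems(1) by blast
  ultimately show ?case using wm_nest.hyps wm_nest.prems
    by (auto simp: label_run_append split: if_splits)
next
  case (wm_app u v)
  obtain T where "label_run C R lab S u = Some T"
    using wm_app.prems(2) by (cases "label_run C R lab S u") (auto simp: label_run_append)
  moreover from this have "T = S" using wm_app.IH(1)[of S] wm_app.prems(1) by simp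
  ultimately show ?case using wm_app.IH(2)[of S] wm_app.prems by (auto simp: label_run_append)
qed auto

lemma label_run_matched_labels_eq:
  assumes "C \<inter> R = {}" "label_run C R lab S w \<noteq> None" "matched C R w j k"
  shows "lab (w ! j) = lab (w ! k)"
proof -
  obtain x c u r y where w: "w = x @ c # u @ r # y" "j = length x" "k = Suc (length x + length u)"
    and "c \<in> C" "r \<in> R" "well_matched C R u"
    using assms(3) unfolding matched_iff_split by blast
  obtain S0 where "label_run C R lab S x = Some S0"
    using assms(2) unfolding w by (cases "label_run C R lab S x") (auto simp: label_run_append)
  moreover have "r \<notin> C" using \<open>r \<in> R\<close> assms(1) by blast
  ultimately obtain T where T: "label_run C R lab (lab c # S0) u = Some T"
    and rest: "label_run C R lab T (r # y) \<noteq> None"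
    using assms(2) \<open>c \<in> C\<close> unfolding w
    by (cases "label_run C R lab (lab c # S0) u") (auto simp: label_run_append)
  from T have "T = lab c # S0"
    using label_run_well_matched[OF \<open>well_matched C R u\<close> assms(1), of lab "lab c # S0"] by simp
  with rest \<open>r \<in> R\<close> \<open>r \<notin> C\<close> have "lab c = lab r"
    by (auto split: if_splits)
  then show ?thesis using w by (simp add: nth_append)
qed

section \<open>Reordering a shuffle into a well-nested word\<close>

locale component_family =
  fixes n :: nat and Cl Rt \<Sigma> :: "nat \<Rightarrow> 'a set" and D :: "'a set"
  assumes components_disjoint: "i < n \<Longrightarrow> j < n \<Longrightarrow> i \<noteq> j \<Longrightarrow> \<Sigma> i \<inter> \<Sigma> j = {}"
    and calls_returns_subset: "i < n \<Longrightarrow> Cl i \<union> Rt i \<subseteq> \<Sigma> i"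
    and calls_returns_disjoint: "i < n \<Longrightarrow> Cl i \<inter> Rt i = {}"
    and calls_returns_independent: "i < n \<Longrightarrow> (Cl i \<union> Rt i) \<inter> D = {}"
begin

abbreviation "calls \<equiv> \<Union>i<n. Cl i"
abbreviation "returns \<equiv> \<Union>i<n. Rt i"
abbreviation "letters \<equiv> \<Union>i<n. \<Sigma> i"

definition component_of :: "'a \<Rightarrow> nat" where
  "component_of a = (THE i. i < n \<and> a \<in> \<Sigma> i)"

abbreviation "run \<equiv> label_run calls returns component_of"

lemma component_of_eq: "i < n \<Longrightarrow> a \<in> \<Sigma> i \<Longrightarrow> component_of a = i"
  unfolding component_of_def using components_disjoint by blast

lemma component_of_letter: "a \<in> letters \<Longrightarrow> component_of a < n \<and> a \<in> \<Sigma> (component_of a)"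
  using component_of_eq by auto

lemma calls_iff: "i < n \<Longrightarrow> a \<in> \<Sigma> i \<Longrightarrow> a \<in> calls \<longleftrightarrow> a \<in> Cl i"
  using calls_returns_subset components_disjoint by blast

lemma returns_iff: "i < n \<Longrightarrow> a \<in> \<Sigma> i \<Longrightarrow> a \<in> returns \<longleftrightarrow> a \<in> Rt i"
  using calls_returns_subset components_disjoint by blast

lemma calls_returns_disjoint_all: "calls \<inter> returns = {}"
  using calls_iff calls_returns_disjoint calls_returns_subset by blast

lemma run_component_word:
  assumes "i < n" "set x \<subseteq> \<Sigma> i" "\<forall>m. 0 \<le> int k + balance (Cl i) (Rt i) (take m x)"
  shows "run (replicate k i @ S) x = Some (replicate (nat (int k + balance (Cl i) (Rt i) x)) i @ S)"
  using assms(2,3)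
proof (induction x arbitrary: k)
  case (Cons a x)
  have a: "a \<in> \<Sigma> i" "component_of a = i" using Cons.prems(1) component_of_eq[OF assms(1)] by auto
  have x: "set x \<subseteq> \<Sigma> i" using Cons.prems(1) by simp
  have prefixes: "0 \<le> int k + balance (Cl i) (Rt i) [a] + balance (Cl i) (Rt i) (take m x)" for m
    using Cons.prems(2)[rule_format, of "Suc m"] by simp
  consider "a \<in> Cl i" | "a \<notin> Cl i" "a \<in> Rt i" | "a \<notin> Cl i" "a \<notin> Rt i" by blast
  then show ?case
  proof cases
    case 1
    then have "\<forall>m. 0 \<le> int (Suc k) + balance (Cl i) (Rt i) (take m x)"
      using prefixes by (simp add: add.commute)
    note Cons.IH[OF x this]
    then show ?thesis using 1 a calls_iff[OF assms(1) a(1)] by (simp add: algebra_simps)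
  next
    case 2
    then obtain k' where k: "k = Suc k'" using prefixes[of 0] by (cases k) auto
    then have "\<forall>m. 0 \<le> int k' + balance (Cl i) (Rt i) (take m x)"
      using prefixes 2 by simp
    note Cons.IH[OF x this]
    then show ?thesis
      using 2 a k calls_iff[OF assms(1) a(1)] returns_iff[OF assms(1) a(1)]
      by (simp add: algebra_simps)
  next
    case 3
    then have "\<forall>m. 0 \<le> int k + balance (Cl i) (Rt i) (take m x)"
      using prefixes by simp
    note Cons.IH[OF x this]
    then show ?thesis
      using 3 a calls_iff[OF assms(1) a(1)] returns_iff[OF assms(1) a(1)] by simp
  qed
qed simp

lemma balance_letter:
  assumes "i < n" "j < n" "a \<in> \<Sigma> j"
  shows "balance (Cl i) (Rt i) [a] = (if i = j then balance (Cl j) (Rt j) [a] else 0)"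
  using assms calls_returns_subset components_disjoint by fastforce

lemma run_count:
  assumes "set x \<subseteq> letters" "run S x = Some S'" "i < n"
  shows "int (count_list S' i) = int (count_list S i) + balance (Cl i) (Rt i) x"
  using assms(1,2)
proof (induction x arbitrary: S)
  case (Cons a x)
  then obtain j where j: "j < n" "a \<in> \<Sigma> j" "component_of a = j" using component_of_eq by auto
  have x: "set x \<subseteq> letters" using Cons.prems(1) by simp
  have step: "balance (Cl i) (Rt i) [a] = (if i = j then balance (Cl j) (Rt j) [a] else 0)"
    using balance_letter[OF assms(3) j(1,2)] .
  consider "a \<in> Cl j" | "a \<in> Rt j" | "a \<notin> Cl j" "a \<notin> Rt j" by blast
  then show ?case
  proof cases
    case 1
    then have "run (j # S) x = Some S'" using Cons.prems(2) j calls_iff by auto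
    then show ?thesis using Cons.IH[OF x] step 1 by auto
  next
    case 2
    then have "a \<notin> Cl j" using calls_returns_disjoint[OF j(1)] by blast
    then obtain S0 where "S = j # S0" "run S0 x = Some S'"
      using 2 Cons.prems(2) j calls_iff returns_iff by (cases S) (auto split: if_splits)
    then show ?thesis using Cons.IH[OF x] step 2 \<open>a \<notin> Cl j\<close> by auto
  next
    case 3
    then have "run S x = Some S'" using Cons.prems(2) j calls_iff returns_iff by auto
    then show ?thesis using Cons.IH[OF x] step 3 by auto
  qed
qed simp

lemma run_labels:
  assumes "set x \<subseteq> letters" "run S x = Some S'" "set S \<subseteq> {..<n}"
  shows "set S' \<subseteq> {..<n}"
  using assms
proof (induction x arbitrary: S)
  case (Cons a x)
  then have "component_of a < n" using component_of_eq by auto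
  then obtain S0 where "run S0 x = Some S'" "set S0 \<subseteq> {..<n}"
    using Cons.prems(2,3) by (auto split: if_splits list.splits)
  then show ?case using Cons.IH Cons.prems(1) by simp
qed simp

lemma run_matched_same_component:
  assumes "set w \<subseteq> letters" "run S w \<noteq> None" "matched calls returns w j k"
  shows "\<exists>i<n. w ! j \<in> \<Sigma> i \<and> w ! k \<in> \<Sigma> i"
proof -
  have "j < length w" "k < length w" using assms(3) unfolding matched_def by auto
  then have "w ! j \<in> letters" "w ! k \<in> letters" using assms(1) nth_mem by blast+
  then obtain i i' where "i < n" "w ! j \<in> \<Sigma> i" "i' < n" "w ! k \<in> \<Sigma> i'" by blast
  moreover have "component_of (w ! j) = component_of (w ! k)"
    using label_run_matched_labels_eq[OF calls_returns_disjoint_all assms(2,3)] .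
  ultimately show ?thesis using component_of_eq by auto
qed

text \<open>Independent letters of component \<open>i\<close> are held back in the buffer \<open>B i\<close> and released
  just before the next dependent letter of component \<open>i\<close>.\<close>

primrec schedule :: "(nat \<Rightarrow> 'a list) \<Rightarrow> 'a list \<Rightarrow> 'a list \<times> (nat \<Rightarrow> 'a list)" where
  "schedule B [] = ([], B)"
| "schedule B (a # w) =
     (if a \<in> D then apfst (\<lambda>x. B (component_of a) @ a # x) (schedule (B(component_of a := [])) w)
      else schedule (B(component_of a := B (component_of a) @ [a])) w)"

abbreviation buffers :: "(nat \<Rightarrow> 'a list) \<Rightarrow> bool" where
  "buffers B \<equiv> \<forall>i<n. set (B i) \<subseteq> \<Sigma> i - D"

lemma buffers_snoc:
  "buffers B \<Longrightarrow> a \<in> letters \<Longrightarrow> a \<notin> D \<Longrightarrow> buffers (B(component_of a := B (component_of a) @ [a]))"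
  using component_of_letter by auto

lemma schedule_buffers: "buffers B \<Longrightarrow> set w \<subseteq> letters \<Longrightarrow> buffers (snd (schedule B w))"
proof (induction w arbitrary: B)
  case (Cons a w)
  then show ?case using buffers_snoc by simp
qed simp

lemma schedule_letters: "buffers B \<Longrightarrow> set w \<subseteq> letters \<Longrightarrow> set (fst (schedule B w)) \<subseteq> letters"
proof (induction w arbitrary: B)
  case (Cons a w)
  then have "set (B (component_of a)) \<subseteq> letters"
    using component_of_letter[of a] by fastforce
  then show ?case using Cons buffers_snoc by simp
qed simp

lemma schedule_projection:
  assumes "buffers B" "set w \<subseteq> letters" "i < n"
  shows "filter (\<lambda>a. a \<in> \<Sigma> i) (fst (schedule B w)) @ snd (schedule B w) i =
    B i @ filter (\<lambda>a. a \<in> \<Sigma> i) w"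
  using assms(1,2)
proof (induction w arbitrary: B)
  case (Cons a w)
  have a: "component_of a < n" "a \<in> \<Sigma> (component_of a)" using component_of_letter Cons.prems(2) by auto
  have "filter (\<lambda>a. a \<in> \<Sigma> i) (B (component_of a)) = (if component_of a = i then B i else [])"
    using Cons.prems(1) a components_disjoint[OF assms(3) a(1)]
    by (force simp: filter_id_conv filter_empty_conv)
  moreover have "a \<in> \<Sigma> i \<longleftrightarrow> component_of a = i" using a components_disjoint[OF assms(3) a(1)] by blast
  ultimately show ?case using Cons buffers_snoc by auto
qed simp

lemma schedule_dependent_projection:
  "buffers B \<Longrightarrow> set w \<subseteq> letters \<Longrightarrow> filter (\<lambda>a. a \<in> D) (fst (schedule B w)) = filter (\<lambda>a. a \<in> D) w"
proof (induction w arbitrary: B)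
  case (Cons a w)
  then have "filter (\<lambda>a. a \<in> D) (B (component_of a)) = []"
    using component_of_letter[of a] by (auto simp: filter_empty_conv)
  then show ?case using Cons buffers_snoc by simp
qed simp

text \<open>Loop invariant of \<open>schedule\<close>: \<open>\<alpha>\<close> is the part of \<open>\<rho> i\<close> already emitted.\<close>

definition pending :: "(nat \<Rightarrow> 'a list) \<Rightarrow> (nat \<Rightarrow> 'a list) \<Rightarrow> 'a list \<Rightarrow> bool" where
  "pending \<rho> B w \<longleftrightarrow>
     (\<forall>i<n. \<exists>\<alpha>. \<rho> i = \<alpha> @ B i @ filter (\<lambda>a. a \<in> \<Sigma> i) w \<and> (\<alpha> = [] \<or> last \<alpha> \<in> D))"

lemma pending_Cons:
  assumes "pending \<rho> B (a # w)" "a \<in> letters"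
  shows "a \<in> D \<Longrightarrow> pending \<rho> (B(component_of a := [])) w"
    and "a \<notin> D \<Longrightarrow> pending \<rho> (B(component_of a := B (component_of a) @ [a])) w"
proof -
  have other: "a \<notin> \<Sigma> j" if "j < n" "j \<noteq> component_of a" for j
    using component_of_letter[OF assms(2)] components_disjoint[OF that(1)] that(2) by blast
  have pre: "\<exists>\<alpha>. \<rho> j = \<alpha> @ B j @ filter (\<lambda>a. a \<in> \<Sigma> j) (a # w) \<and> (\<alpha> = [] \<or> last \<alpha> \<in> D)"
    if "j < n" for j
    using assms(1) that unfolding pending_def by blast
  show "pending \<rho> (B(component_of a := [])) w" if "a \<in> D"
    unfolding pending_def
  proof (intro allI impI)
    fix j assume "j < n"
    then obtain \<alpha> where \<alpha>: "\<rho> j = \<alpha> @ B j @ filter (\<lambda>a. a \<in> \<Sigma> j) (a # w)" "\<alpha> = [] \<or> last \<alpha> \<in> D"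
      using pre by blast
    show "\<exists>\<alpha>. \<rho> j = \<alpha> @ (B(component_of a := [])) j @ filter (\<lambda>a. a \<in> \<Sigma> j) w \<and> (\<alpha> = [] \<or> last \<alpha> \<in> D)"
    proof (cases "j = component_of a")
      case True
      then show ?thesis
        using \<alpha>(1) component_of_letter[OF assms(2)] \<open>a \<in> D\<close> by (intro exI[of _ "\<alpha> @ B j @ [a]"]) simp
    next
      case False
      then show ?thesis using \<alpha> other[OF \<open>j < n\<close>] by auto
    qed
  qed
  show "pending \<rho> (B(component_of a := B (component_of a) @ [a])) w" if "a \<notin> D"
    unfolding pending_def
  proof (intro allI impI)
    fix j assume "j < n"
    then obtain \<alpha> where \<alpha>: "\<rho> j = \<alpha> @ B j @ filter (\<lambda>a. a \<in> \<Sigma> j) (a # w)" "\<alpha> = [] \<or> last \<alpha> \<in> D"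
      using pre by blast
    then show "\<exists>\<alpha>. \<rho> j = \<alpha> @ (B(component_of a := B (component_of a) @ [a])) j @
        filter (\<lambda>a. a \<in> \<Sigma> j) w \<and> (\<alpha> = [] \<or> last \<alpha> \<in> D)"
      using component_of_letter[OF assms(2)] other[OF \<open>j < n\<close>] by (cases "j = component_of a") auto
  qed
qed

lemma buffer_prefix_balance_nonneg:
  assumes "buffers B" "pending \<rho> B (a # w)" "a \<in> letters" "a \<in> D"
    and "early_returns_enclosed (Cl (component_of a)) (Rt (component_of a)) D (\<rho> (component_of a))"
  shows "0 \<le> balance (Cl (component_of a)) (Rt (component_of a)) (take m (B (component_of a)))"
proof -
  define i where "i = component_of a"
  have a: "i < n" "a \<in> \<Sigma> i" using component_of_letter[OF assms(3)] unfolding i_def by auto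
  then obtain \<alpha> where \<alpha>: "\<rho> i = \<alpha> @ B i @ filter (\<lambda>a. a \<in> \<Sigma> i) (a # w)" "\<alpha> = [] \<or> last \<alpha> \<in> D"
    using assms(2) unfolding pending_def by blast
  have "early_returns_enclosed (Cl i) (Rt i) D (\<alpha> @ B i @ filter (\<lambda>a. a \<in> \<Sigma> i) (a # w))"
    using assms(5) unfolding i_def[symmetric] by (simp only: \<alpha>(1))
  moreover have "set (B i) \<inter> D = {}" using assms(1) a(1) by auto
  moreover have "set (filter (\<lambda>a. a \<in> \<Sigma> i) (a # w)) \<inter> D \<noteq> {}" using a assms(4) by auto
  ultimately show ?thesis
    using prefix_balance_nonneg_before_dependent calls_returns_disjoint[OF a(1)] \<alpha>(2)
    unfolding i_def by simp
qed

lemma schedule_run: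
  assumes "buffers B" "set w \<subseteq> letters" "pending \<rho> B w"
    and enclosed: "\<forall>i<n. early_returns_enclosed (Cl i) (Rt i) D (\<rho> i)"
  shows "run S (fst (schedule B w)) \<noteq> None"
  using assms(1-3)
proof (induction w arbitrary: B S)
  case (Cons a w)
  define i where "i = component_of a"
  have a: "i < n" "a \<in> \<Sigma> i" "a \<in> letters"
    using component_of_letter Cons.prems(2) unfolding i_def by auto
  show ?case
  proof (cases "a \<in> D")
    case True
    have "run S' (fst (schedule (B(i := [])) w)) \<noteq> None" for S'
      using Cons.IH Cons.prems pending_Cons(1)[OF Cons.prems(3) a(3) True] unfolding i_def by simp
    moreover have "run S (B i) \<noteq> None"
      using run_component_word[OF a(1), of "B i" 0 S] Cons.prems(1) a(1)
        buffer_prefix_balance_nonneg[OF Cons.prems(1,3) a(3) True] enclosed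
      unfolding i_def by auto
    moreover have "a \<notin> calls" "a \<notin> returns"
      using calls_iff[OF a(1,2)] returns_iff[OF a(1,2)] calls_returns_independent[OF a(1)] True
      by auto
    ultimately show ?thesis
      using True unfolding i_def by (auto simp: label_run_append)
  next
    case False
    then show ?thesis
      using Cons.IH Cons.prems pending_Cons(2)[OF Cons.prems(3) a(3) False] buffers_snoc by simp
  qed
qed simp

text \<open>Empties the final buffers against the label stack \<open>L\<close> left by \<open>schedule\<close>: for the topmost
  label \<open>i\<close>, release \<open>B i\<close> up to the return that closes that call.\<close>

primrec unwind :: "(nat \<Rightarrow> 'a list) \<Rightarrow> nat list \<Rightarrow> 'a list" where
  "unwind B [] = concat (map B [0..<n])"
| "unwind B (i # L) =
     fst (split_below (Cl i) (Rt i) 0 (B i)) @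
     unwind (B(i := snd (split_below (Cl i) (Rt i) 0 (B i)))) L"

lemma unwind_subset: "set L \<subseteq> {..<n} \<Longrightarrow> set (unwind B L) \<subseteq> (\<Union>i<n. set (B i))"
proof (induction L arbitrary: B)
  case (Cons i L)
  let ?p = "fst (split_below (Cl i) (Rt i) 0 (B i))"
    and ?q = "snd (split_below (Cl i) (Rt i) 0 (B i))"
  have i: "i < n" and L: "set L \<subseteq> {..<n}" using Cons.prems by simp_all
  have pq: "set ?p \<union> set ?q = set (B i)" by (metis set_append split_below_append)
  then have "(\<Union>j<n. set ((B(i := ?q)) j)) \<subseteq> (\<Union>j<n. set (B j))"
    using i by (auto split: if_splits)
  with Cons.IH[OF L] have "set (unwind (B(i := ?q)) L) \<subseteq> (\<Union>j<n. set (B j))"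
    by (rule order_trans)
  then show ?case using pq i by auto
qed auto

lemma unwind_projection:
  assumes "set L \<subseteq> {..<n}" "\<forall>i<n. set (B i) \<subseteq> \<Sigma> i" "j < n"
  shows "filter (\<lambda>a. a \<in> \<Sigma> j) (unwind B L) = B j"
  using assms(1,2)
proof (induction L arbitrary: B)
  case Nil
  have "filter (\<lambda>a. a \<in> \<Sigma> j) (B i) = (if i = j then B j else [])" if "i < n" for i
    using Nil.prems(2) that components_disjoint[OF that assms(3)]
    by (force simp: filter_id_conv filter_empty_conv)
  then have "filter (\<lambda>a. a \<in> \<Sigma> j) (concat (map B [0..<m])) = (if j < m then B j else [])"
    if "m \<le> n" for m
    using that by (induction m) auto
  then show ?case using assms(3) by simp
next
  case (Cons i L)
  let ?p = "fst (split_below (Cl i) (Rt i) 0 (B i))"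
    and ?q = "snd (split_below (Cl i) (Rt i) 0 (B i))"
  have i: "i < n" using Cons.prems(1) by simp
  have pq: "?p @ ?q = B i" by (rule split_below_append)
  then have "set ?p \<subseteq> \<Sigma> i" "set ?q \<subseteq> \<Sigma> i" using Cons.prems(2) i by (metis le_supE set_append)+
  then have "filter (\<lambda>a. a \<in> \<Sigma> j) ?p = (if i = j then ?p else [])"
    using components_disjoint[OF i assms(3)] by (force simp: filter_id_conv filter_empty_conv)
  moreover have "\<forall>k<n. set ((B(i := ?q)) k) \<subseteq> \<Sigma> k"
    using Cons.prems(2) \<open>set ?q \<subseteq> \<Sigma> i\<close> by simp
  then have "filter (\<lambda>a. a \<in> \<Sigma> j) (unwind (B(i := ?q)) L) = (B(i := ?q)) j"
    using Cons.IH Cons.prems(1) by simp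
  ultimately show ?case using pq by auto
qed

lemma run_concat_balanced:
  assumes "\<forall>i<n. set (B i) \<subseteq> \<Sigma> i" "\<forall>i<n. \<forall>m. 0 \<le> balance (Cl i) (Rt i) (take m (B i))"
    "\<forall>i<n. balance (Cl i) (Rt i) (B i) = 0"
  shows "run [] (concat (map B [0..<n])) = Some []"
proof -
  have "run [] (concat (map B [0..<m])) = Some []" if "m \<le> n" for m
    using that
  proof (induction m)
    case (Suc m)
    then have "run [] (B m) = Some []"
      using run_component_word[of m "B m" 0 "[]"] assms by simp
    then show ?case using Suc by (simp add: label_run_append)
  qed simp
  then show ?thesis by simp
qed

lemma unwind_run:
  assumes "set L \<subseteq> {..<n}" "\<forall>i<n. set (B i) \<subseteq> \<Sigma> i"
    and "\<forall>i<n. \<forall>m. 0 \<le> int (count_list L i) + balance (Cl i) (Rt i) (take m (B i))"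
    and "\<forall>i<n. int (count_list L i) + balance (Cl i) (Rt i) (B i) = 0"
  shows "run L (unwind B L) = Some []"
  using assms
proof (induction L arbitrary: B)
  case Nil
  then show ?case using run_concat_balanced by simp
next
  case (Cons i L)
  obtain p q where split: "split_below (Cl i) (Rt i) 0 (B i) = (p, q)" by fastforce
  have i: "i < n" and L: "set L \<subseteq> {..<n}" using Cons.prems(1) by simp_all
  have B: "B i = p @ q" using split_below_append[of "Cl i" "Rt i" 0 "B i"] split by simp
  have "set (B i) \<subseteq> \<Sigma> i" using Cons.prems(2) i by blast
  then have sig: "set p \<subseteq> \<Sigma> i" "set q \<subseteq> \<Sigma> i" unfolding B by auto
  have "int (count_list L i) + 1 + balance (Cl i) (Rt i) (B i) = 0"
    using Cons.prems(4)[rule_format, OF i] by simp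
  then have p: "balance (Cl i) (Rt i) p = -1" "\<forall>m. -1 \<le> balance (Cl i) (Rt i) (take m p)"
    using split_below_balance[of 0 "Cl i" "Rt i" "B i"] split by simp_all
  have "0 \<le> int 1 + balance (Cl i) (Rt i) (take m p)" for m
    using p(2)[rule_format, of m] by linarith
  then have "\<forall>m. 0 \<le> int 1 + balance (Cl i) (Rt i) (take m p)" ..
  from run_component_word[OF i sig(1) this, of L] have "run (i # L) p = Some L"
    using p(1) by simp
  moreover have "run L (unwind (B(i := q)) L) = Some []"
  proof (rule Cons.IH[OF L])
    show "\<forall>j<n. set ((B(i := q)) j) \<subseteq> \<Sigma> j" using Cons.prems(2) sig by simp
    have "0 \<le> int (count_list L i) + balance (Cl i) (Rt i) (take m q)" for m
      using Cons.prems(3)[rule_format, OF i, of "length p + m"] p(1) B by simp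
    moreover have "0 \<le> int (count_list L j) + balance (Cl j) (Rt j) (take m (B j))"
      if "j < n" "j \<noteq> i" for j m
      using Cons.prems(3)[rule_format, OF that(1), of m] that(2) by simp
    ultimately show "\<forall>j<n. \<forall>m.
        0 \<le> int (count_list L j) + balance (Cl j) (Rt j) (take m ((B(i := q)) j))"
      by simp
    have "int (count_list L j) + balance (Cl j) (Rt j) ((B(i := q)) j) = 0" if "j < n" for j
      using Cons.prems(4)[rule_format, OF that] p(1) B by (cases "j = i") simp_all
    then show "\<forall>j<n. int (count_list L j) + balance (Cl j) (Rt j) ((B(i := q)) j) = 0" by blast
  qed
  ultimately show ?case using split by (simp add: label_run_append)
qed


lemma unwind_run_after_schedule:
  assumes w: "set w \<subseteq> letters"
    and wm: "\<forall>i<n. well_matched (Cl i) (Rt i) (filter (\<lambda>a. a \<in> \<Sigma> i) w)"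
    and schedule: "schedule (\<lambda>_. []) w = (X, B)" and L: "run [] X = Some L"
  shows "run L (unwind B L) = Some []"
proof (rule unwind_run)
  have empty: "buffers (\<lambda>_. [])" by simp
  have X: "set X \<subseteq> letters" using schedule_letters[OF empty w] schedule by simp
  then show "set L \<subseteq> {..<n}" using run_labels[OF _ L] by simp
  show "\<forall>i<n. set (B i) \<subseteq> \<Sigma> i" using schedule_buffers[OF empty w] schedule by auto
  have split: "filter (\<lambda>a. a \<in> \<Sigma> i) X @ B i = filter (\<lambda>a. a \<in> \<Sigma> i) w" if "i < n" for i
    using schedule_projection[OF empty w that] schedule by simp
  have count: "int (count_list L i) = balance (Cl i) (Rt i) (filter (\<lambda>a. a \<in> \<Sigma> i) X)"
    if "i < n" for i
    using run_count[OF X L that] balance_filter[of "Cl i" "Rt i" "\<lambda>a. a \<in> \<Sigma> i" X]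
      calls_returns_subset[OF that] by auto
  have "0 \<le> int (count_list L i) + balance (Cl i) (Rt i) (take m (B i))" if "i < n" for i m
    using well_matched_prefix_balance_nonneg[OF wm[rule_format, OF that]
        calls_returns_disjoint[OF that], of "length (filter (\<lambda>a. a \<in> \<Sigma> i) X) + m"]
      split[OF that, symmetric] count[OF that] by simp
  then show "\<forall>i<n. \<forall>m. 0 \<le> int (count_list L i) + balance (Cl i) (Rt i) (take m (B i))" by blast
  have "int (count_list L i) + balance (Cl i) (Rt i) (B i) = 0" if "i < n" for i
    using well_matched_balance[OF wm[rule_format, OF that] calls_returns_disjoint[OF that]]
      split[OF that] count[OF that] by (metis balance_append)
  then show "\<forall>i<n. int (count_list L i) + balance (Cl i) (Rt i) (B i) = 0" by blast
qed

lemma reorder_well_nested: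
  assumes w: "set w \<subseteq> letters"
    and wm: "\<forall>i<n. well_matched (Cl i) (Rt i) (filter (\<lambda>a. a \<in> \<Sigma> i) w)"
    and enclosed: "\<forall>i<n. early_returns_enclosed (Cl i) (Rt i) D (filter (\<lambda>a. a \<in> \<Sigma> i) w)"
  obtains w' where "\<forall>i<n. filter (\<lambda>a. a \<in> \<Sigma> i) w' = filter (\<lambda>a. a \<in> \<Sigma> i) w"
    and "filter (\<lambda>a. a \<in> D) w' = filter (\<lambda>a. a \<in> D) w" and "set w' \<subseteq> letters"
    and "\<forall>j k. matched calls returns w' j k \<longrightarrow> (\<exists>i<n. w' ! j \<in> \<Sigma> i \<and> w' ! k \<in> \<Sigma> i)"
proof -
  obtain X B where schedule: "schedule (\<lambda>_. []) w = (X, B)" by fastforce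
  have empty: "buffers (\<lambda>_. [])" by simp
  have "pending (\<lambda>i. filter (\<lambda>a. a \<in> \<Sigma> i) w) (\<lambda>_. []) w" unfolding pending_def by simp
  then obtain L where L: "run [] X = Some L"
    using schedule_run[OF empty w _ enclosed, of "[]"] schedule by fastforce
  have X: "set X \<subseteq> letters" "filter (\<lambda>a. a \<in> D) X = filter (\<lambda>a. a \<in> D) w"
    using schedule_letters[OF empty w] schedule_dependent_projection[OF empty w] schedule
    by simp_all
  have B: "buffers B" using schedule_buffers[OF empty w] schedule by simp
  have "set L \<subseteq> {..<n}" using run_labels[OF X(1) L] by simp
  then have "set (unwind B L) \<subseteq> (\<Union>i<n. set (B i))" using unwind_subset by blast
  then have U: "set (unwind B L) \<subseteq> letters" "filter (\<lambda>a. a \<in> D) (unwind B L) = []"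
    using B by (fastforce simp: filter_empty_conv)+
  show thesis
  proof
    have "\<forall>i<n. set (B i) \<subseteq> \<Sigma> i" using B by blast
    then show "\<forall>i<n. filter (\<lambda>a. a \<in> \<Sigma> i) (X @ unwind B L) = filter (\<lambda>a. a \<in> \<Sigma> i) w"
      using schedule_projection[OF empty w] schedule unwind_projection[OF \<open>set L \<subseteq> {..<n}\<close>]
      by simp
    show "filter (\<lambda>a. a \<in> D) (X @ unwind B L) = filter (\<lambda>a. a \<in> D) w" using X U by simp
    show "set (X @ unwind B L) \<subseteq> letters" using X U by simp
    have "run [] (X @ unwind B L) \<noteq> None"
      using L unwind_run_after_schedule[OF w wm schedule L] by (simp add: label_run_append)
    then show "\<forall>j k. matched calls returns (X @ unwind B L) j k \<longrightarrow>
        (\<exists>i<n. (X @ unwind B L) ! j \<in> \<Sigma> i \<and> (X @ unwind B L) ! k \<in> \<Sigma> i)"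
      using run_matched_same_component X U by simp
  qed
qed

end

section \<open>Independence\<close>

definition dependent :: "nat \<Rightarrow> (nat \<Rightarrow> 'a set) \<Rightarrow> (nat \<Rightarrow> 'a set) \<Rightarrow> (nat \<Rightarrow> 'a set) \<Rightarrow>
    ('a \<Rightarrow> ('c \<times> 'c) set) \<Rightarrow> 'a set" where
  "dependent n Cl Rt It M = (\<Union>i<n. sigma Cl Rt It i - indep n Cl Rt It M i)"

lemma dependent_iff:
  assumes "\<forall>i<n. \<forall>j<n. i \<noteq> j \<longrightarrow> sigma Cl Rt It i \<inter> sigma Cl Rt It j = {}"
    and "i < n" "a \<in> sigma Cl Rt It i"
  shows "a \<in> dependent n Cl Rt It M \<longleftrightarrow> a \<notin> indep n Cl Rt It M i"
  using assms unfolding dependent_def indep_def by blast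

lemma filter_eq_if_coarser_filter_eq:
  assumes "filter P w' = filter P w" "\<forall>z \<in> set w \<union> set w'. Q z \<longrightarrow> P z"
  shows "filter Q w' = filter Q w"
proof -
  have "filter Q v = filter Q (filter P v)" if "\<forall>z \<in> set v. Q z \<longrightarrow> P z" for v
    using that by (auto simp: filter_filter intro: filter_cong)
  then show ?thesis using assms by (metis Un_iff)
qed

lemma noncommuting_pair_in_component_or_dependent:
  assumes disj: "\<forall>i<n. \<forall>j<n. i \<noteq> j \<longrightarrow> sigma Cl Rt It i \<inter> sigma Cl Rt It j = {}"
    and dep: "x = y \<or> \<not> sound_commute M x y"
  obtains i where "i < n" "\<forall>z \<in> (\<Union>i<n. sigma Cl Rt It i). z \<in> {x, y} \<longrightarrow> z \<in> sigma Cl Rt It i"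
  | "\<forall>z \<in> (\<Union>i<n. sigma Cl Rt It i). z \<in> {x, y} \<longrightarrow> z \<in> dependent n Cl Rt It M"
proof (cases "\<exists>i<n. \<exists>j<n. i \<noteq> j \<and> x \<in> sigma Cl Rt It i \<and> y \<in> sigma Cl Rt It j")
  case True
  then obtain i j where ij: "i < n" "j < n" "i \<noteq> j" "x \<in> sigma Cl Rt It i" "y \<in> sigma Cl Rt It j"
    by blast
  then have "x \<noteq> y" using disj[rule_format, OF ij(1-3)] by blast
  then have "\<not> sound_commute M x y" using dep by blast
  moreover have "\<not> sound_commute M y x" using calculation sound_commute_sym[of M y x] by simp
  ultimately have "x \<notin> indep n Cl Rt It M i" "y \<notin> indep n Cl Rt It M j"
    using ij unfolding indep_def by blast+
  then show ?thesis using ij that(2) unfolding dependent_def by blast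
next
  case no_split: False
  show ?thesis
  proof (cases "\<exists>i<n. x \<in> sigma Cl Rt It i \<or> y \<in> sigma Cl Rt It i")
    case True
    then obtain i where "i < n" "x \<in> sigma Cl Rt It i \<or> y \<in> sigma Cl Rt It i" by blast
    then show ?thesis using no_split that(1) by blast
  next
    case False
    then show ?thesis using that(2) by blast
  qed
qed

lemma sem_word_eq_if_projections_eq:
  assumes disj: "\<forall>i<n. \<forall>j<n. i \<noteq> j \<longrightarrow> sigma Cl Rt It i \<inter> sigma Cl Rt It j = {}"
    and letters: "set w \<subseteq> (\<Union>i<n. sigma Cl Rt It i)" "set w' \<subseteq> (\<Union>i<n. sigma Cl Rt It i)"
    and components:
      "\<forall>i<n. filter (\<lambda>a. a \<in> sigma Cl Rt It i) w' = filter (\<lambda>a. a \<in> sigma Cl Rt It i) w"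
    and dependents:
      "filter (\<lambda>a. a \<in> dependent n Cl Rt It M) w' = filter (\<lambda>a. a \<in> dependent n Cl Rt It M) w"
  shows "sem_word M w' = sem_word M w"
proof (rule sem_word_eq_if_pair_projections_eq)
  fix x y assume dep: "x = y \<or> \<not> sound_commute M x y"
  let ?U = "\<Union>i<n. sigma Cl Rt It i"
  have via: "filter (\<lambda>z. z \<in> {x, y}) w' = filter (\<lambda>z. z \<in> {x, y}) w"
    if "filter P w' = filter P w" "\<forall>z \<in> ?U. z \<in> {x, y} \<longrightarrow> P z" for P
  proof (rule filter_eq_if_coarser_filter_eq[OF that(1)], intro ballI impI)
    fix z assume "z \<in> set w \<union> set w'" "z \<in> {x, y}"
    then have "z \<in> ?U" using letters by blast
    then show "P z" using that(2) \<open>z \<in> {x, y}\<close> by blast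
  qed
  show "filter (\<lambda>z. z \<in> {x, y}) w' = filter (\<lambda>z. z \<in> {x, y}) w"
  proof (rule noncommuting_pair_in_component_or_dependent[OF disj dep])
    fix i assume "i < n" "\<forall>z \<in> ?U. z \<in> {x, y} \<longrightarrow> z \<in> sigma Cl Rt It i"
    then show ?thesis using via[OF components[rule_format, OF \<open>i < n\<close>]] by blast
  next
    assume "\<forall>z \<in> ?U. z \<in> {x, y} \<longrightarrow> z \<in> dependent n Cl Rt It M"
    then show ?thesis using via[OF dependents] by blast
  qed
qed

lemma tail_independent_early_returns_enclosed:
  assumes disj: "\<forall>i<n. \<forall>j<n. i \<noteq> j \<longrightarrow> sigma Cl Rt It i \<inter> sigma Cl Rt It j = {}"
    and "i < n" "Cl i \<inter> Rt i = {}"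
    and "tail_independent n Cl Rt It M P i" "\<rho> \<in> P i"
  shows "early_returns_enclosed (Cl i) (Rt i) (dependent n Cl Rt It M) \<rho>"
  unfolding early_returns_enclosed_def
proof (intro allI impI, elim conjE)
  fix q j assume q: "q < j" "j < length \<rho>" "\<rho> ! q \<in> Rt i" and j: "\<rho> ! j \<in> dependent n Cl Rt It M"
  obtain u v where uv: "\<rho> = u @ v" "u \<in> lists (sigma Cl Rt It i)" "v \<in> lists (sigma Cl Rt It i)"
    and split: "indep_split n Cl Rt It M i u v" and v: "set v \<subseteq> indep n Cl Rt It M i"
    using assms(4,5) unfolding tail_independent_def by blast
  have letters: "\<rho> ! l \<in> sigma Cl Rt It i" if "l < length \<rho>" for l
    using uv(1-3) that by (auto simp: nth_append)
  have "j < length u"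
  proof (rule ccontr)
    assume "\<not> j < length u"
    then have "\<rho> ! j \<in> indep n Cl Rt It M i" using v q(2) uv(1) by (auto simp: nth_append)
    then show False using j dependent_iff[OF disj assms(2) letters[OF q(2)]] by blast
  qed
  then obtain k where k: "matched (Cl i) (Rt i) \<rho> q k \<or> matched (Cl i) (Rt i) \<rho> k q"
    and span: "\<forall>l. min q k \<le> l \<and> l \<le> max q k \<longrightarrow> \<rho> ! l \<in> indep n Cl Rt It M i"
  proof -
    have "q < length \<rho>" "\<rho> ! q \<in> Rt i \<and> q < length u" using q \<open>j < length u\<close> by auto
    then show ?thesis
      using that split unfolding indep_split_def Let_def uv(1)[symmetric] by blast
  qed
  have "\<not> matched (Cl i) (Rt i) \<rho> q k" using q(3) assms(3) unfolding matched_def by blast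
  then have m: "matched (Cl i) (Rt i) \<rho> k q" using k by blast
  have "\<rho> ! l \<notin> dependent n Cl Rt It M" if "k \<le> l" "l \<le> q" for l
  proof -
    have "l < length \<rho>" "min q k \<le> l" "l \<le> max q k" using that q by auto
    then show ?thesis using span dependent_iff[OF disj assms(2) letters] by blast
  qed
  then show "\<exists>k. matched (Cl i) (Rt i) \<rho> k q \<and> (\<forall>l. k \<le> l \<and> l \<le> q \<longrightarrow> \<rho> ! l \<notin> dependent n Cl Rt It M)"
    using m by blast
qed

lemma sigma_swap: "sigma Rt Cl It = sigma Cl Rt It"
  by (auto simp: sigma_def fun_eq_iff)

lemma indep_swap: "indep n Rt Cl It M = indep n Cl Rt It M"
  unfolding indep_def by (simp add: sigma_swap)

lemma dependent_swap: "dependent n Rt Cl It M = dependent n Cl Rt It M"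
  unfolding dependent_def by (simp add: sigma_swap indep_swap)

lemma indep_split_rev:
  assumes "indep_split n Cl Rt It M i u v"
  shows "indep_split n Rt Cl It M i (rev v) (rev u)"
  unfolding indep_split_def Let_def indep_swap[of n Rt Cl]
proof (intro allI impI)
  define \<rho> where "\<rho> = u @ v"
  define N where "N = length \<rho>"
  fix j' assume j': "j' < length (rev v @ rev u)"
    and cond: "(rev v @ rev u) ! j' \<in> Rt i \<and> length (rev v) \<le> j' \<or>
      (rev v @ rev u) ! j' \<in> Cl i \<and> j' < length (rev v)"
  have rev: "rev v @ rev u = rev \<rho>" unfolding \<rho>_def by simp
  define j where "j = N - 1 - j'"
  have "j' < N" using j' unfolding N_def \<rho>_def by simp
  then have j: "j < N" "j' = N - 1 - j" "rev \<rho> ! j' = \<rho> ! j"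
    unfolding j_def N_def by (auto simp: rev_nth)
  have "N = length u + length v" unfolding N_def \<rho>_def by simp
  then have "\<rho> ! j \<in> Cl i \<and> length u \<le> j \<or> \<rho> ! j \<in> Rt i \<and> j < length u"
    using cond \<open>j' < N\<close> j(3) unfolding rev j_def by auto
  then obtain k where k: "matched (Cl i) (Rt i) \<rho> j k \<or> matched (Cl i) (Rt i) \<rho> k j"
    and span: "\<forall>l. min j k \<le> l \<and> l \<le> max j k \<longrightarrow> \<rho> ! l \<in> indep n Cl Rt It M i"
    using assms j(1) unfolding indep_split_def Let_def \<rho>_def[symmetric] N_def by blast
  define k' where "k' = N - 1 - k"
  have "k < N" using k unfolding matched_def N_def by auto
  then have "matched (Rt i) (Cl i) (rev \<rho>) j' k' \<or> matched (Rt i) (Cl i) (rev \<rho>) k' j'"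
    using k matched_rev j(2) unfolding k'_def N_def by metis
  moreover have "rev \<rho> ! l' \<in> indep n Cl Rt It M i" if "min j' k' \<le> l'" "l' \<le> max j' k'" for l'
  proof -
    have "l' < N" "min j k \<le> N - 1 - l'" "N - 1 - l' \<le> max j k"
      using that j(1,2) \<open>k < N\<close> unfolding k'_def by auto
    then show ?thesis using span unfolding N_def by (simp add: rev_nth)
  qed
  ultimately show "\<exists>k. (matched (Rt i) (Cl i) (rev v @ rev u) j' k \<or>
        matched (Rt i) (Cl i) (rev v @ rev u) k j') \<and>
      (\<forall>l. min j' k \<le> l \<and> l \<le> max j' k \<longrightarrow> (rev v @ rev u) ! l \<in> indep n Cl Rt It M i)"
    unfolding rev by blast
qed

lemma head_independent_rev:
  assumes "head_independent n Cl Rt It M P i"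
  shows "tail_independent n Rt Cl It M (\<lambda>i. rev ` P i) i"
  unfolding tail_independent_def
proof
  fix \<rho>' assume "\<rho>' \<in> rev ` P i"
  then obtain \<rho> where "\<rho> \<in> P i" "\<rho>' = rev \<rho>" by blast
  then obtain u v where "\<rho> = u @ v" "u \<in> lists (sigma Cl Rt It i)" "v \<in> lists (sigma Cl Rt It i)"
    "indep_split n Cl Rt It M i u v" "set u \<subseteq> indep n Cl Rt It M i"
    using assms unfolding head_independent_def by blast
  then have "\<rho>' = rev v @ rev u \<and> rev v \<in> lists (sigma Rt Cl It i) \<and> rev u \<in> lists (sigma Rt Cl It i) \<and>
      indep_split n Rt Cl It M i (rev v) (rev u) \<and> set (rev u) \<subseteq> indep n Rt Cl It M i"
    using indep_split_rev \<open>\<rho>' = rev \<rho>\<close> by (simp add: sigma_swap indep_swap in_lists_conv_set)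
  then show "\<exists>u' v'. \<rho>' = u' @ v' \<and> u' \<in> lists (sigma Rt Cl It i) \<and> v' \<in> lists (sigma Rt Cl It i) \<and>
      indep_split n Rt Cl It M i u' v' \<and> set v' \<subseteq> indep n Rt Cl It M i"
    by blast
qed

lemma rev_shuffle_swap:
  "w \<in> shuffle n Cl Rt It P \<Longrightarrow> rev w \<in> shuffle n Rt Cl It (\<lambda>i. rev ` P i)"
  unfolding shuffle_def by (auto simp: sigma_swap simp flip: rev_filter)

lemma well_nested_rev_swap:
  assumes "well_nested n Rt Cl It w"
  shows "well_nested n Cl Rt It (rev w)"
  unfolding well_nested_def
proof (intro allI impI)
  fix j k assume m: "matched (\<Union>i<n. Cl i) (\<Union>i<n. Rt i) (rev w) j k"
  then have jk: "j < length w" "k < length w" unfolding matched_def by auto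
  have "matched (\<Union>i<n. Rt i) (\<Union>i<n. Cl i) w (length w - 1 - k) (length w - 1 - j)"
    using matched_rev[OF m] by simp
  then obtain i where "i < n" "w ! (length w - 1 - k) \<in> sigma Rt Cl It i"
    "w ! (length w - 1 - j) \<in> sigma Rt Cl It i"
    using assms unfolding well_nested_def by blast
  then show "\<exists>i<n. rev w ! j \<in> sigma Cl Rt It i \<and> rev w ! k \<in> sigma Cl Rt It i"
    using jk by (auto simp: rev_nth sigma_swap)
qed

lemma rev_nested_shuffle_swap:
  "w \<in> nested_shuffle n Rt Cl It (\<lambda>i. rev ` P i) \<Longrightarrow> rev w \<in> nested_shuffle n Cl Rt It P"
  unfolding nested_shuffle_def shuffle_def
  by (auto simp: sigma_swap rev_filter[symmetric] well_nested_rev_swap)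

lemma tail_independent_reorder:
  assumes vp: "\<forall>i<n. vp_alphabet (Cl i) (Rt i) (It i)"
    and disj: "\<forall>i<n. \<forall>j<n. i \<noteq> j \<longrightarrow> sigma Cl Rt It i \<inter> sigma Cl Rt It j = {}"
    and wm: "\<forall>i<n. \<forall>\<rho> \<in> P i. well_matched (Cl i) (Rt i) \<rho>"
    and cr_indep: "\<forall>i<n. Cl i \<union> Rt i \<subseteq> indep n Cl Rt It M i"
    and tail: "\<forall>i<n. tail_independent n Cl Rt It M P i"
    and w: "w \<in> shuffle n Cl Rt It P"
  obtains w' where "w' \<in> nested_shuffle n Cl Rt It P"
    and "\<forall>i<n. filter (\<lambda>a. a \<in> sigma Cl Rt It i) w' = filter (\<lambda>a. a \<in> sigma Cl Rt It i) w"
    and "filter (\<lambda>a. a \<in> dependent n Cl Rt It M) w' = filter (\<lambda>a. a \<in> dependent n Cl Rt It M) w"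
proof -
  have calls_returns_disjoint: "Cl i \<inter> Rt i = {}" if "i < n" for i
    using vp that unfolding vp_alphabet_def by blast
  interpret component_family n Cl Rt "sigma Cl Rt It" "dependent n Cl Rt It M"
  proof
    fix i assume i: "i < n"
    show "Cl i \<union> Rt i \<subseteq> sigma Cl Rt It i" unfolding sigma_def by blast
    show "Cl i \<inter> Rt i = {}" using calls_returns_disjoint[OF i] .
    show "(Cl i \<union> Rt i) \<inter> dependent n Cl Rt It M = {}"
      using cr_indep i dependent_iff[OF disj i] unfolding sigma_def by blast
  qed (use disj in blast)
  have letters: "set w \<subseteq> letters" and components: "\<forall>i<n. filter (\<lambda>a. a \<in> sigma Cl Rt It i) w \<in> P i"
    using w unfolding shuffle_def by auto
  obtain w' where w': "\<forall>i<n. filter (\<lambda>a. a \<in> sigma Cl Rt It i) w' = filter (\<lambda>a. a \<in> sigma Cl Rt It i) w"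
    "filter (\<lambda>a. a \<in> dependent n Cl Rt It M) w' = filter (\<lambda>a. a \<in> dependent n Cl Rt It M) w"
    "set w' \<subseteq> letters"
    "\<forall>j k. matched calls returns w' j k \<longrightarrow> (\<exists>i<n. w' ! j \<in> sigma Cl Rt It i \<and> w' ! k \<in> sigma Cl Rt It i)"
  proof (rule reorder_well_nested[OF letters])
    show "\<forall>i<n. well_matched (Cl i) (Rt i) (filter (\<lambda>a. a \<in> sigma Cl Rt It i) w)"
      using wm components by blast
    show "\<forall>i<n. early_returns_enclosed (Cl i) (Rt i) (dependent n Cl Rt It M)
        (filter (\<lambda>a. a \<in> sigma Cl Rt It i) w)"
      using tail_independent_early_returns_enclosed[OF disj _ calls_returns_disjoint] tail components
      by blast
  qed
  moreover have "w' \<in> nested_shuffle n Cl Rt It P"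
    using w' components unfolding nested_shuffle_def shuffle_def well_nested_def
    by (simp add: in_lists_conv_set subset_iff)
  ultimately show thesis using that by blast
qed

lemma nested_reordering:
  assumes vp: "\<forall>i<n. vp_alphabet (Cl i) (Rt i) (It i)"
    and disj: "\<forall>i<n. \<forall>j<n. i \<noteq> j \<longrightarrow> sigma Cl Rt It i \<inter> sigma Cl Rt It j = {}"
    and wm: "\<forall>i<n. \<forall>\<rho> \<in> P i. well_matched (Cl i) (Rt i) \<rho>"
    and cr_indep: "\<forall>i<n. Cl i \<union> Rt i \<subseteq> indep n Cl Rt It M i"
    and ind: "(\<forall>i<n. tail_independent n Cl Rt It M P i) \<or> (\<forall>i<n. head_independent n Cl Rt It M P i)"
    and w: "w \<in> shuffle n Cl Rt It P"
  obtains w' where "w' \<in> nested_shuffle n Cl Rt It P"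
    and "\<forall>i<n. filter (\<lambda>a. a \<in> sigma Cl Rt It i) w' = filter (\<lambda>a. a \<in> sigma Cl Rt It i) w"
    and "filter (\<lambda>a. a \<in> dependent n Cl Rt It M) w' = filter (\<lambda>a. a \<in> dependent n Cl Rt It M) w"
  using ind
proof
  assume "\<forall>i<n. tail_independent n Cl Rt It M P i"
  then show thesis using tail_independent_reorder[OF vp disj wm cr_indep _ w] that by blast
next
  assume head: "\<forall>i<n. head_independent n Cl Rt It M P i"
  obtain w'' where w'': "w'' \<in> nested_shuffle n Rt Cl It (\<lambda>i. rev ` P i)"
    "\<forall>i<n. filter (\<lambda>a. a \<in> sigma Rt Cl It i) w'' = filter (\<lambda>a. a \<in> sigma Rt Cl It i) (rev w)"
    "filter (\<lambda>a. a \<in> dependent n Rt Cl It M) w'' = filter (\<lambda>a. a \<in> dependent n Rt Cl It M) (rev w)"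
  proof (rule tail_independent_reorder)
    show "\<forall>i<n. vp_alphabet (Rt i) (Cl i) (It i)" using vp unfolding vp_alphabet_def by blast
    show "\<forall>i<n. \<forall>j<n. i \<noteq> j \<longrightarrow> sigma Rt Cl It i \<inter> sigma Rt Cl It j = {}"
      using disj by (simp add: sigma_swap)
    show "\<forall>i<n. \<forall>\<rho> \<in> rev ` P i. well_matched (Rt i) (Cl i) \<rho>" using wm well_matched_rev by blast
    show "\<forall>i<n. Rt i \<union> Cl i \<subseteq> indep n Rt Cl It M i"
      using cr_indep by (simp add: indep_swap Un_commute)
    show "\<forall>i<n. tail_independent n Rt Cl It M (\<lambda>i. rev ` P i) i"
      using head head_independent_rev by blast
    show "rev w \<in> shuffle n Rt Cl It (\<lambda>i. rev ` P i)" using rev_shuffle_swap[OF w] .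
  qed
  show thesis
  proof (rule that[of "rev w''"])
    show "rev w'' \<in> nested_shuffle n Cl Rt It P" using rev_nested_shuffle_swap[OF w''(1)] .
    show "\<forall>i<n. filter (\<lambda>a. a \<in> sigma Cl Rt It i) (rev w'') = filter (\<lambda>a. a \<in> sigma Cl Rt It i) w"
      using w''(2) by (simp add: sigma_swap flip: rev_filter)
    show "filter (\<lambda>a. a \<in> dependent n Cl Rt It M) (rev w'') = filter (\<lambda>a. a \<in> dependent n Cl Rt It M) w"
      using w''(3) by (simp add: dependent_swap flip: rev_filter)
  qed
qed

theorem theorem5p3:
  fixes n :: nat
    and Cl Rt It :: "nat \<Rightarrow> 'a set"
    and P :: "nat \<Rightarrow> 'a list set"
    and M :: "'a \<Rightarrow> ('c \<times> 'c) set"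
  assumes vp: "\<forall>i<n. vp_alphabet (Cl i) (Rt i) (It i)"
    and disj: "\<forall>i<n. \<forall>j<n. i \<noteq> j \<longrightarrow> sigma Cl Rt It i \<inter> sigma Cl Rt It j = {}"
    and lang: "\<forall>i<n. P i \<subseteq> lists (sigma Cl Rt It i)"
    and isvpl: "\<forall>i<n. vpl (Cl i) (Rt i) (It i) (P i)"
    and wm: "\<forall>i<n. \<forall>\<rho> \<in> P i. well_matched (Cl i) (Rt i) \<rho>"
    and cr_indep: "\<forall>i<n. Cl i \<union> Rt i \<subseteq> indep n Cl Rt It M i"
    and ind: "(\<forall>i<n. tail_independent n Cl Rt It M P i) \<or>
              (\<forall>i<n. head_independent n Cl Rt It M P i)"
  shows "\<forall>pre post. hoare M pre (nested_shuffle n Cl Rt It P) post \<longrightarrow>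
                    hoare M pre (shuffle n Cl Rt It P) post"
proof (intro allI impI)
  fix pre post
  assume nested: "hoare M pre (nested_shuffle n Cl Rt It P) post"
  show "hoare M pre (shuffle n Cl Rt It P) post"
    unfolding hoare_def
  proof (intro ballI allI impI)
    fix \<rho> s s' assume \<rho>: "\<rho> \<in> shuffle n Cl Rt It P" and exec: "(s, s') \<in> sem_word M \<rho>" "s \<in> pre"
    obtain w' where w': "w' \<in> nested_shuffle n Cl Rt It P"
      "\<forall>i<n. filter (\<lambda>a. a \<in> sigma Cl Rt It i) w' = filter (\<lambda>a. a \<in> sigma Cl Rt It i) \<rho>"
      "filter (\<lambda>a. a \<in> dependent n Cl Rt It M) w' = filter (\<lambda>a. a \<in> dependent n Cl Rt It M) \<rho>"
      using nested_reordering[OF vp disj wm cr_indep ind \<rho>] .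
    have "set \<rho> \<subseteq> (\<Union>i<n. sigma Cl Rt It i)" "set w' \<subseteq> (\<Union>i<n. sigma Cl Rt It i)"
      using \<rho> w'(1) unfolding nested_shuffle_def shuffle_def by (auto simp: in_lists_conv_set)
    then have "sem_word M w' = sem_word M \<rho>"
      using sem_word_eq_if_projections_eq[OF disj _ _ w'(2,3)] by blast
    then show "s' \<in> post" using nested w'(1) exec unfolding hoare_def by auto
  qed
qed

end
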